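(* Let $(\delta_t)_{t\ge1}$ be a sequence of nonnegative reals, let $\kappa>0$, $\omega\ge0$, $\sigma>0$ and $\epsilon_t=\sigma/t^2$. If $$\delta_{t+1}\le\delta_t-\kappa\delta_t^2+\omega\epsilon_t\quad\text{for all }t\ge1,$$ then for all $t\ge1$, $\delta_t\le C/t$, where $$C:=\frac{4}{\kappa}\Big(1+\sqrt{2\omega\sigma\kappa(\omega\sigma\kappa+1)}\Big)+4\max\Big\{\delta_1,\frac{4}{\kappa}\Big\}.$$ *)

theory Defs
  imports Complex_Main
begin

end

theory Submission imports Defs begin

text \<open>The map \<open>g x = x - \<kappa> x\<^sup>2\<close> is increasing on \<open>[0, 1/(2\<kappa>)]\<close> and bounded by \<open>1/(4\<kappa>)\<close>.
  Propagating \<open>\<delta>\<^sub>t \<le> C/t\<close> one step, either \<open>C/t\<close> lies in the increasing range, so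
  \<open>\<delta>\<^sub>t\<^sub>+\<^sub>1 \<le> g (C/t) + \<omega>\<sigma>/t\<^sup>2\<close> and the quadratic loss \<open>\<kappa>C\<^sup>2/t\<^sup>2\<close> pays for both the
  noise and the decrease from \<open>C/t\<close> to \<open>C/(t+1)\<close>; or \<open>t < 2\<kappa>C\<close>, and then the crude bound
  \<open>1/(4\<kappa>) + \<omega>\<sigma>/t\<^sup>2\<close> is already below \<open>C/(t+1)\<close>. Only \<open>C \<ge> 16/\<kappa>\<close> and
  \<open>C \<ge> 2(\<delta>\<^sub>1 + \<omega>\<sigma>)\<close> are needed, and the constant of the theorem satisfies both.\<close>

lemma quadratic_map_mono:
  fixes k x u :: real
  assumes "k > 0" "0 \<le> x" "x \<le> u" "u \<le> 1 / (2 * k)"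
  shows "x - k * x\<^sup>2 \<le> u - k * u\<^sup>2"
proof -
  have "k * x \<le> k * u"
    using assms by simp
  moreover have "k * u \<le> 1 / 2"
    using assms by (simp add: field_simps)
  ultimately have "k * (x + u) \<le> 1"
    by (simp add: algebra_simps)
  then have "0 \<le> (u - x) * (1 - k * (x + u))"
    using assms by simp
  then show ?thesis
    by (simp add: algebra_simps power2_eq_square)
qed

lemma quadratic_map_le:
  fixes k x :: real
  assumes "k > 0"
  shows "x - k * x\<^sup>2 \<le> 1 / (4 * k)"
proof -
  have "k * x\<^sup>2 - x + 1 / (4 * k) = k * (x - 1 / (2 * k))\<^sup>2"
    using assms by (simp add: power2_eq_square field_simps)
  also have "\<dots> \<ge> 0"
    using assms by simp
  finally show ?thesis
    by linarith
qed

lemma le_sqrt_two_mult_add_one: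
  fixes x :: real
  assumes "0 \<le> x"
  shows "x \<le> sqrt (2 * x * (x + 1))"
  using assms by (simp add: real_le_rsqrt power2_eq_square algebra_simps)

lemma perturbed_quadratic_step:
  fixes k a C t x y :: real
  assumes k: "k > 0" and a: "0 \<le> a" and C_k: "16 / k \<le> C" and C_a: "2 * a \<le> C"
    and t: "2 \<le> t" and x: "0 \<le> x" "x \<le> C / t"
    and y: "y \<le> x - k * x\<^sup>2 + a / t\<^sup>2"
  shows "y \<le> C / (t + 1)"
proof (cases "C / t \<le> 1 / (2 * k)")
  case True
  have "16 \<le> k * C"
    using C_k k by (simp add: field_simps)
  then have "16 * C \<le> k * C * C"
    using C_a a by (intro mult_right_mono) auto
  then have "C + a \<le> k * C\<^sup>2"
    using C_a a by (simp add: power2_eq_square)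
  have "y \<le> C / t - k * (C / t)\<^sup>2 + a / t\<^sup>2"
    using quadratic_map_mono[OF k x True] y by linarith
  also have "\<dots> = (C * t - (k * C\<^sup>2 - a)) / t\<^sup>2"
    using t by (simp add: field_simps power2_eq_square)
  also have "\<dots> \<le> (C * t - C) / t\<^sup>2"
    using \<open>C + a \<le> k * C\<^sup>2\<close> by (intro divide_right_mono) auto
  also have "\<dots> \<le> C / (t + 1)"
  proof -
    have "(C * t - C) * (t + 1) \<le> C * t\<^sup>2"
      using C_a a by (simp add: algebra_simps power2_eq_square)
    then show ?thesis
      using t by (simp add: field_simps)
  qed
  finally show ?thesis .
next
  case False
  then have "t < 2 * k * C"
    using t k by (simp add: field_simps)
  have "2 * t \<le> t * t"
    using t by (intro mult_right_mono) auto
  then have "t + 1 \<le> 3 / 4 * t\<^sup>2"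
    unfolding power2_eq_square using t by linarith
  then have "a * (t + 1) \<le> a * (3 / 4 * t\<^sup>2)"
    using a by (intro mult_left_mono)
  then have "a / t\<^sup>2 * (t + 1) \<le> 3 / 4 * a"
    using t by (simp add: field_simps)
  moreover have "(t + 1) / (4 * k) \<le> C / 2 + 1 / (4 * k)"
    using \<open>t < 2 * k * C\<close> k by (simp add: field_simps)
  moreover have "1 / (4 * k) \<le> C / 64"
    using C_k k by (simp add: field_simps)
  moreover have "(1 / (4 * k) + a / t\<^sup>2) * (t + 1) = (t + 1) / (4 * k) + a / t\<^sup>2 * (t + 1)"
    by (simp add: algebra_simps)
  ultimately have "(1 / (4 * k) + a / t\<^sup>2) * (t + 1) \<le> C"
    using C_a a by linarith
  then have "1 / (4 * k) + a / t\<^sup>2 \<le> C / (t + 1)"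
    using t by (simp add: field_simps)
  then show ?thesis
    using quadratic_map_le[OF k, of x] y by linarith
qed

lemma perturbed_quadratic_recursion_bound:
  fixes \<delta> :: "nat \<Rightarrow> real" and k a C :: real
  assumes k: "k > 0" and a: "0 \<le> a"
    and nonneg: "\<And>t. 1 \<le> t \<Longrightarrow> 0 \<le> \<delta> t"
    and rec: "\<And>t. 1 \<le> t \<Longrightarrow> \<delta> (t + 1) \<le> \<delta> t - k * (\<delta> t)\<^sup>2 + a / (real t)\<^sup>2"
    and C_k: "16 / k \<le> C" and C_init: "2 * (\<delta> 1 + a) \<le> C"
    and t: "1 \<le> t"
  shows "\<delta> t \<le> C / real t"
  using t
proof (induction t rule: nat_induct_at_least)
  case base
  show ?case
    using C_init a nonneg[of 1] by simp
next
  case (Suc t)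
  show ?case
  proof (cases "t = 1")
    case True
    have "0 \<le> k * (\<delta> 1)\<^sup>2"
      using k by simp
    then have "\<delta> 2 \<le> \<delta> 1 + a"
      using rec[of 1] by (simp add: numeral_2_eq_2)
    then show ?thesis
      using True C_init by (simp add: numeral_2_eq_2)
  next
    case False
    then have "2 \<le> real t"
      using Suc.hyps by simp
    then show ?thesis
      using perturbed_quadratic_step[OF k a C_k _ _ nonneg Suc.IH rec] Suc.hyps C_init a
        nonneg[of 1]
      by (simp add: add.commute)
  qed
qed

theorem lemma11:
  fixes \<delta> :: "nat \<Rightarrow> real" and \<kappa> \<omega> \<sigma> :: real and \<epsilon> :: "nat \<Rightarrow> real"
  assumes nonneg: "\<And>t. t \<ge> 1 \<Longrightarrow> \<delta> t \<ge> 0"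
    and \<kappa>_pos: "\<kappa> > 0" and \<omega>_nonneg: "\<omega> \<ge> 0" and \<sigma>_pos: "\<sigma> > 0"
    and \<epsilon>_def: "\<And>t. t \<ge> 1 \<Longrightarrow> \<epsilon> t = \<sigma> / (real t)^2"
    and rec: "\<And>t. t \<ge> 1 \<Longrightarrow> \<delta> (t + 1) \<le> \<delta> t - \<kappa> * (\<delta> t)^2 + \<omega> * \<epsilon> t"
  shows "\<forall>t \<ge> 1. \<delta> t \<le>
    ((4 / \<kappa>) * (1 + sqrt (2 * \<omega> * \<sigma> * \<kappa> * (\<omega> * \<sigma> * \<kappa> + 1)))
      + 4 * max (\<delta> 1) (4 / \<kappa>)) / real t"
proof (intro allI impI)
  fix t :: nat
  assume "1 \<le> t"
  define a where "a = \<omega> * \<sigma>"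
  define s where "s = sqrt (2 * \<omega> * \<sigma> * \<kappa> * (\<omega> * \<sigma> * \<kappa> + 1))"
  have a: "0 \<le> a"
    unfolding a_def using \<omega>_nonneg \<sigma>_pos by simp
  have "0 \<le> a * \<kappa>"
    using a \<kappa>_pos by simp
  then have s_ge: "a * \<kappa> \<le> s"
    using le_sqrt_two_mult_add_one[of "a * \<kappa>"] unfolding s_def a_def by (simp add: mult.assoc)
  then have "(4 / \<kappa>) * (a * \<kappa>) \<le> (4 / \<kappa>) * (1 + s)"
    using \<kappa>_pos by (intro mult_left_mono) auto
  then have "2 * a \<le> (4 / \<kappa>) * (1 + s)"
    using \<kappa>_pos a by simp
  moreover have "0 \<le> (4 / \<kappa>) * (1 + s)"
    using order.trans[OF _ s_ge] a \<kappa>_pos by simp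
  moreover have "0 \<le> \<delta> 1"
    using nonneg by simp
  ultimately have C_k: "16 / \<kappa> \<le> (4 / \<kappa>) * (1 + s) + 4 * max (\<delta> 1) (4 / \<kappa>)"
    and C_init: "2 * (\<delta> 1 + a) \<le> (4 / \<kappa>) * (1 + s) + 4 * max (\<delta> 1) (4 / \<kappa>)"
    by (simp_all add: max_def)
  have rec_a: "\<delta> (r + 1) \<le> \<delta> r - \<kappa> * (\<delta> r)\<^sup>2 + a / (real r)\<^sup>2" if "1 \<le> r" for r
    using rec[OF that] \<epsilon>_def[OF that] unfolding a_def by simp
  show "\<delta> t \<le> ((4 / \<kappa>) * (1 + s) + 4 * max (\<delta> 1) (4 / \<kappa>)) / real t"
    by (rule perturbed_quadratic_recursion_bound[where \<delta> = \<delta>, OF \<kappa>_pos a nonneg rec_a C_k C_init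
          \<open>1 \<le> t\<close>])
qed

end
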